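(* In $\mathbb Z[E(\mathbb Q)]^-$ the following identities hold: $$7\,(x)\diamond(y)+(x_1)\diamond(y_1)=-2\,(-y)\diamond(1+y)+(x-y)\diamond(1-x+y),$$ $$5\,(x)\diamond(y)+(x_2)\diamond(y_2)=-\,(-y)\diamond(1+y)+(x-y)\diamond(1-x+y).$$
   Context: Let $E$ be the elliptic curve $y^2+y=x^3-x$ over $\mathbb Q$ (conductor 37), with origin the point at infinity $O$. Its Mordell–Weil group $E(\mathbb Q)$ is infinite cyclic, generated by $P=(0,0)$. On $E$, consider the rational functions $x,\ y$ and $$x_1=x-1,\quad y_1=y-2x+2,\qquad x_2=x-1,\quad y_2=-x+y+1,$$ together with $-y,\ 1+y,\ x-y,\ 1-x+y$. All of these have divisors supported on $E(\mathbb Q)$. Let $\mathbb Z[E(\mathbb Q)]^-$ be the quotient of the free abelian group $\mathbb Z[E(\mathbb Q)]$ on the symbols $[Q]$, $Q\in E(\mathbb Q)$, by the subgroup generated by all $[Q]+[-Q]$. For nonconstant functions $f,g$ on $E$ with divisors $$(f)=\sum_{n\in\mathbb Z}a_n[nP],\qquad (g)=\sum_{n\in\mathbb Z}b_n[nP],$$ define $$(f)\diamond(g)=\sum_{m,n}a_nb_m\,[(n-m)P]\in\mathbb Z[E(\mathbb Q)]^-.$$ *)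

theory Defs
  imports "HOL-Computational_Algebra.Polynomial"
begin

datatype pt = Inf | Aff rat rat

fun onE :: "pt \<Rightarrow> bool" where
  "onE Inf = True"
| "onE (Aff x y) = (y^2 + y = x^3 - x)"

fun negE :: "pt \<Rightarrow> pt" where
  "negE Inf = Inf"
| "negE (Aff x y) = Aff x (- 1 - y)"

text \<open>Chord-tangent group law for a Weierstrass curve with a1 = a2 = a6 = 0, a3 = 1, a4 = -1.\<close>
fun addE :: "pt \<Rightarrow> pt \<Rightarrow> pt" where
  "addE Inf Q = Q"
| "addE P Inf = P"
| "addE (Aff x1 y1) (Aff x2 y2) =
     (if x1 = x2 \<and> y1 + y2 + 1 = 0 then Inf
      else (let l = (if x1 = x2 then (3 * x1^2 - 1) / (2 * y1 + 1) else (y2 - y1) / (x2 - x1));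
                v = y1 - l * x1;
                x3 = l^2 - x1 - x2
            in Aff x3 (- (l * x3 + v) - 1)))"

definition subE :: "pt \<Rightarrow> pt \<Rightarrow> pt" where
  "subE P Q = addE P (negE Q)"

type_synonym linf = "rat \<times> rat \<times> rat"

text \<open>Order of vanishing at an affine point of E lying on the line f = 0:
  the intersection multiplicity of the line with E there, i.e. the order of the root of the
  cubic equation restricted to the (parametrised) line.\<close>
fun ordAff :: "linf \<Rightarrow> rat \<Rightarrow> rat \<Rightarrow> nat" where
  "ordAff (al, be, ga) a b =
     (if ga \<noteq> 0 then
        (let L = [: - al / ga, - be / ga :] in order a (L^2 + L - [:0, 1:]^3 + [:0, 1:]))
      else
        (let c = - al / be in order b ([:0, 1:]^2 + [:0, 1:] - [: c^3 - c :])))"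

fun evalL :: "linf \<Rightarrow> rat \<Rightarrow> rat \<Rightarrow> rat" where
  "evalL (al, be, ga) a b = al + be * a + ga * b"

text \<open>Divisor (restricted to rational points) of a nonconstant linear function; pole of order
  3 at O for non-vertical lines, order 2 for vertical ones.\<close>
fun divL :: "linf \<Rightarrow> pt \<Rightarrow> int" where
  "divL (al, be, ga) Inf = - (if ga \<noteq> 0 then 3 else 2)"
| "divL f (Aff a b) = (if onE (Aff a b) \<and> evalL f a b = 0 then int (ordAff f a b) else 0)"

definition diamond :: "(pt \<Rightarrow> int) \<Rightarrow> (pt \<Rightarrow> int) \<Rightarrow> pt \<Rightarrow> int" where
  "diamond d e T = (\<Sum>(Q, R) \<in> {(Q, R). d Q \<noteq> 0 \<and> e R \<noteq> 0 \<and> subE Q R = T}. d Q * e R)"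

definition diaL :: "linf \<Rightarrow> linf \<Rightarrow> pt \<Rightarrow> int" where
  "diaL f g = diamond (divL f) (divL g)"

inductive_set Zminus_rel :: "(pt \<Rightarrow> int) set" where
  zero: "(\<lambda>_. 0) \<in> Zminus_rel"
| gen: "onE Q \<Longrightarrow> c \<in> Zminus_rel \<Longrightarrow>
          (\<lambda>T. c T + k * ((if T = Q then 1 else 0) + (if T = negE Q then 1 else 0))) \<in> Zminus_rel"

definition eqm :: "(pt \<Rightarrow> int) \<Rightarrow> (pt \<Rightarrow> int) \<Rightarrow> bool" where
  "eqm c d \<longleftrightarrow> (\<lambda>T. c T - d T) \<in> Zminus_rel"

definition fx :: linf where "fx = (0, 1, 0)"
definition fy :: linf where "fy = (0, 0, 1)"
definition fx1 :: linf where "fx1 = (-1, 1, 0)"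
definition fy1 :: linf where "fy1 = (2, -2, 1)"
definition fx2 :: linf where "fx2 = (-1, 1, 0)"
definition fy2 :: linf where "fy2 = (1, -1, 1)"
definition fmy :: linf where "fmy = (0, 0, -1)"
definition f1py :: linf where "f1py = (1, 0, 1)"
definition fxmy :: linf where "fxmy = (0, 1, -1)"
definition f1mxpy :: linf where "f1mxpy = (1, -1, 1)"

end

theory Submission
  imports Defs
begin

(* Every function occurring in the identities has its divisor supported on the multiples nP,
   |n| <= 4, of P = (0,0); the divisor is read off from the factorisation of the cubic restricted
   to the line f = 0.  On such divisors the pairing only needs nP - mP = (n - m)P for |n|, |m| <= 4,
   which is checked by computing the points nP for |n| <= 8.  Both identities thereby become
   identities between formal sums of the c_k [kP], and such a sum lies in the subgroup generated
   by all [Q] + [-Q] as soon as c_(-k) = c_k for all k and c_0 is even (for Q = O the generator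
   is 2[O]). *)

lemma order_linear_factor: "order a [:-r, 1:] = of_bool (a = r)"
proof (cases "a = r")
  case True
  then show ?thesis using order_power_n_n[of a 1] by simp
next
  case False
  then show ?thesis by (simp add: order_0I)
qed

definition formal_sum :: "(pt \<times> int) list \<Rightarrow> pt \<Rightarrow> int" where
  "formal_sum ps T = (\<Sum>(Q, c)\<leftarrow>ps. c * of_bool (T = Q))"

lemma formal_sum_Nil [simp]: "formal_sum [] T = 0"
  by (simp add: formal_sum_def)

lemma formal_sum_Cons [simp]: "formal_sum ((Q, c) # ps) T = c * of_bool (T = Q) + formal_sum ps T"
  by (simp add: formal_sum_def)

lemma formal_sum_outside_support: "T \<notin> fst ` set ps \<Longrightarrow> formal_sum ps T = 0"
  by (induction ps) auto

lemma divL_nonvertical: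
  fixes al be ga r1 r2 r3 :: rat
  assumes "ga \<noteq> 0"
    and factors: "[:-al/ga, -be/ga:]^2 + [:-al/ga, -be/ga:] - [:0, 1:]^3 + [:0, 1:]
                    = - ([:-r1, 1:] * [:-r2, 1:] * [:-r3, 1:])"
    and on_line: "al + be * r1 + ga * b1 = 0" "al + be * r2 + ga * b2 = 0" "al + be * r3 + ga * b3 = 0"
  shows "divL (al, be, ga) = formal_sum [(Inf, -3), (Aff r1 b1, 1), (Aff r2 b2, 1), (Aff r3 b3, 1)]"
proof
  fix T
  show "divL (al, be, ga) T = formal_sum [(Inf, -3), (Aff r1 b1, 1), (Aff r2 b2, 1), (Aff r3 b3, 1)] T"
  proof (cases T)
    case Inf
    then show ?thesis using \<open>ga \<noteq> 0\<close> by simp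
  next
    case (Aff a b)
    let ?L = "[:-al/ga, -be/ga:]"
    have ord: "order a (?L^2 + ?L - [:0, 1:]^3 + [:0, 1:])
        = of_bool (a = r1) + of_bool (a = r2) + of_bool (a = r3)"
      unfolding factors order_uminus
      by (subst order_mult, simp)+ (simp add: order_linear_factor)
    show ?thesis
    proof (cases "al + be * a + ga * b = 0")
      case True
      then have b: "b = -al/ga - be/ga * a" using \<open>ga \<noteq> 0\<close> by (simp add: field_simps)
      have "poly (?L^2 + ?L - [:0, 1:]^3 + [:0, 1:]) a = b^2 + b - a^3 + a"
        by (simp add: b algebra_simps power2_eq_square)
      also have "poly (?L^2 + ?L - [:0, 1:]^3 + [:0, 1:]) a = - ((a - r1) * (a - r2) * (a - r3))"
        unfolding factors by (simp add: algebra_simps)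
      finally have "onE (Aff a b) \<longleftrightarrow> a = r1 \<or> a = r2 \<or> a = r3" by auto
      moreover have "Aff a b = Aff r b' \<longleftrightarrow> a = r" if "al + be * r + ga * b' = 0" for r b'
        using True that \<open>ga \<noteq> 0\<close> by (auto simp: b field_simps)
      ultimately show ?thesis using True Aff ord on_line \<open>ga \<noteq> 0\<close> by (simp add: Let_def)
    next
      case False
      then have "Aff a b \<noteq> Aff r b'" if "al + be * r + ga * b' = 0" for r b'
        using that by auto
      then show ?thesis using False Aff on_line by simp
    qed
  qed
qed

lemma divL_vertical:
  fixes al be a0 s1 s2 :: rat
  assumes "be \<noteq> 0" and on_line: "al + be * a0 = 0"
    and factors: "[:0, 1:]^2 + [:0, 1:] - [:a0^3 - a0:] = [:-s1, 1:] * [:-s2, 1:]"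
  shows "divL (al, be, 0) = formal_sum [(Inf, -2), (Aff a0 s1, 1), (Aff a0 s2, 1)]"
proof
  fix T
  have a0: "- al / be = a0" using assms(1,2) by (simp add: field_simps)
  show "divL (al, be, 0) T = formal_sum [(Inf, -2), (Aff a0 s1, 1), (Aff a0 s2, 1)] T"
  proof (cases T)
    case Inf
    then show ?thesis by simp
  next
    case (Aff a b)
    have ord: "order b ([:0, 1:]^2 + [:0, 1:] - [:a0^3 - a0:]) = of_bool (b = s1) + of_bool (b = s2)"
      unfolding factors by (subst order_mult, simp) (simp add: order_linear_factor)
    show ?thesis
    proof (cases "a = a0")
      case True
      have "poly ([:0, 1:]^2 + [:0, 1:] - [:a0^3 - a0:]) b = b^2 + b - (a^3 - a)"
        by (simp add: True power2_eq_square algebra_simps)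
      also have "poly ([:0, 1:]^2 + [:0, 1:] - [:a0^3 - a0:]) b = (b - s1) * (b - s2)"
        unfolding factors by (simp add: algebra_simps)
      finally have "onE (Aff a b) \<longleftrightarrow> b = s1 \<or> b = s2" by auto
      then show ?thesis using True Aff ord on_line a0 by (auto simp: Let_def)
    next
      case False
      then have "al + be * a \<noteq> 0"
        using on_line \<open>be \<noteq> 0\<close> by (metis add_left_cancel mult_left_cancel)
      then show ?thesis using False Aff by simp
    qed
  qed
qed

definition mult_P :: "int \<Rightarrow> pt" where
  "mult_P n = (if 0 \<le> n then (addE (Aff 0 0) ^^ nat n) Inf
               else negE ((addE (Aff 0 0) ^^ nat (- n)) Inf))"

lemma negE_negE [simp]: "negE (negE Q) = Q"
  by (cases Q) simp_all

lemma mult_P_uminus: "mult_P (- n) = negE (mult_P n)"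
  by (simp add: mult_P_def)

lemma mult_P_succ: "0 \<le> n \<Longrightarrow> mult_P (n + 1) = addE (Aff 0 0) (mult_P n)"
  by (simp add: mult_P_def nat_add_distrib)

lemma mult_P_table:
  "mult_P 0 = Inf" "mult_P 1 = Aff 0 0" "mult_P 2 = Aff 1 0" "mult_P 3 = Aff (-1) (-1)"
  "mult_P 4 = Aff 2 (-3)" "mult_P 5 = Aff (1/4) (-5/8)" "mult_P 6 = Aff 6 14"
  "mult_P 7 = Aff (-5/9) (8/27)" "mult_P 8 = Aff (21/25) (-69/125)"
proof -
  show 0: "mult_P 0 = Inf" by (simp add: mult_P_def)
  show 1: "mult_P 1 = Aff 0 0" using mult_P_succ[of 0] 0 by simp
  show 2: "mult_P 2 = Aff 1 0" using mult_P_succ[of 1] 1 by simp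
  show 3: "mult_P 3 = Aff (-1) (-1)" using mult_P_succ[of 2] 2 by simp
  show 4: "mult_P 4 = Aff 2 (-3)" using mult_P_succ[of 3] 3 by (simp add: power2_eq_square)
  show 5: "mult_P 5 = Aff (1/4) (-5/8)" using mult_P_succ[of 4] 4 by (simp add: power2_eq_square)
  show 6: "mult_P 6 = Aff 6 14" using mult_P_succ[of 5] 5 by (simp add: power2_eq_square)
  show 7: "mult_P 7 = Aff (-5/9) (8/27)" using mult_P_succ[of 6] 6 by (simp add: power2_eq_square)
  show "mult_P 8 = Aff (21/25) (-69/125)" using mult_P_succ[of 7] 7 by (simp add: power2_eq_square)
qed

lemma addE_mult_P:
  assumes "n \<in> {-4..4}" "m \<in> {-4..4}"
  shows "addE (mult_P n) (mult_P m) = mult_P (n + m)"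
proof -
  have "n \<in> {-4, -3, -2, -1, 0, 1, 2, 3, 4}" "m \<in> {-4, -3, -2, -1, 0, 1, 2, 3, 4}"
    using assms by auto
  then show ?thesis by (auto simp: mult_P_table mult_P_uminus power2_eq_square Let_def)
qed

lemma subE_mult_P:
  "n \<in> {-4..4} \<Longrightarrow> m \<in> {-4..4} \<Longrightarrow> subE (mult_P n) (mult_P m) = mult_P (n - m)"
  using addE_mult_P[of n "- m"] by (simp add: subE_def mult_P_uminus)

lemma diamond_eq_double_sum:
  assumes "finite K" "finite L" "\<And>Q. Q \<notin> K \<Longrightarrow> d Q = 0" "\<And>R. R \<notin> L \<Longrightarrow> e R = 0"
  shows "diamond d e T = (\<Sum>Q\<in>K. \<Sum>R\<in>L. d Q * e R * of_bool (T = subE Q R))"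
proof -
  have "diamond d e T = (\<Sum>(Q, R)\<in>K \<times> L. d Q * e R * of_bool (T = subE Q R))"
    unfolding diamond_def
    by (rule sum.mono_neutral_cong_left) (use assms in \<open>auto split: if_splits\<close>)
  then show ?thesis by (simp add: sum.cartesian_product)
qed

lemma sum_formal_sum_mult:
  assumes "finite K" "fst ` set ps \<subseteq> K"
  shows "(\<Sum>Q\<in>K. formal_sum ps Q * g Q) = (\<Sum>(Q, c)\<leftarrow>ps. c * g Q)"
  using assms(2)
proof (induction ps)
  case (Cons p ps)
  obtain Q c where "p = (Q, c)" by fastforce
  with Cons show ?case
    using assms(1) by (simp add: distrib_right sum.distrib mult.assoc sum_distrib_left[symmetric])
qed simp

lemma diamond_formal_sum:
  "diamond (formal_sum ps) (formal_sum qs)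
    = formal_sum [(subE Q R, c * d). (Q, c) \<leftarrow> ps, (R, d) \<leftarrow> qs]"
proof
  fix T
  have "diamond (formal_sum ps) (formal_sum qs) T
      = (\<Sum>Q\<in>fst ` set ps. formal_sum ps Q *
           (\<Sum>R\<in>fst ` set qs. formal_sum qs R * of_bool (T = subE Q R)))"
    by (subst diamond_eq_double_sum[where K = "fst ` set ps" and L = "fst ` set qs"])
       (auto simp: formal_sum_outside_support sum_distrib_left mult.assoc simp del: sum_mult_of_bool_eq)
  also have "\<dots> = (\<Sum>(Q, c)\<leftarrow>ps. c * (\<Sum>(R, d)\<leftarrow>qs. d * of_bool (T = subE Q R)))"
    by (simp add: sum_formal_sum_mult del: sum_mult_of_bool_eq)
  also have "\<dots> = formal_sum [(subE Q R, c * d). (Q, c) \<leftarrow> ps, (R, d) \<leftarrow> qs] T"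
    by (induction ps)
       (auto simp: formal_sum_def sum_list_const_mult[symmetric] mult.assoc case_prod_beta comp_def)
  finally show "diamond (formal_sum ps) (formal_sum qs) T = \<dots>" .
qed

definition formal_sum_P :: "(int \<times> int) list \<Rightarrow> pt \<Rightarrow> int" where
  "formal_sum_P xs = formal_sum (map (\<lambda>(n, c). (mult_P n, c)) xs)"

definition exp_diamond :: "(int \<times> int) list \<Rightarrow> (int \<times> int) list \<Rightarrow> (int \<times> int) list" where
  "exp_diamond xs ys = [(n - m, c * d). (n, c) \<leftarrow> xs, (m, d) \<leftarrow> ys]"

definition formal_coeff :: "(int \<times> int) list \<Rightarrow> int \<Rightarrow> int" where
  "formal_coeff xs k = (\<Sum>(n, c)\<leftarrow>xs. if n = k then c else 0)"

lemma formal_sum_P_Nil [simp]: "formal_sum_P [] T = 0"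
  by (simp add: formal_sum_P_def)

lemma formal_sum_P_Cons [simp]:
  "formal_sum_P ((n, c) # xs) T = c * of_bool (T = mult_P n) + formal_sum_P xs T"
  by (simp add: formal_sum_P_def)

lemma formal_coeff_Nil [simp]: "formal_coeff [] k = 0"
  by (simp add: formal_coeff_def)

lemma formal_coeff_Cons [simp]:
  "formal_coeff ((n, c) # xs) k = (if n = k then c else 0) + formal_coeff xs k"
  by (simp add: formal_coeff_def)

lemma diamond_formal_sum_P:
  assumes "\<forall>(n, c)\<in>set xs. \<forall>(m, d)\<in>set ys. subE (mult_P n) (mult_P m) = mult_P (n - m)"
  shows "diamond (formal_sum_P xs) (formal_sum_P ys) = formal_sum_P (exp_diamond xs ys)"
proof -
  have "[(subE Q R, c * d). (Q, c) \<leftarrow> map (\<lambda>(n, c). (mult_P n, c)) xs,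
                              (R, d) \<leftarrow> map (\<lambda>(n, c). (mult_P n, c)) ys]
      = map (\<lambda>(n, c). (mult_P n, c)) (exp_diamond xs ys)"
    using assms by (induction xs) (auto simp: exp_diamond_def case_prod_beta)
  then show ?thesis by (simp add: formal_sum_P_def diamond_formal_sum)
qed

lemma formal_sum_P_append: "formal_sum_P xs T + formal_sum_P ys T = formal_sum_P (xs @ ys) T"
  by (induction xs) auto

lemma formal_sum_P_scale: "a * formal_sum_P xs T = formal_sum_P (map (apsnd ((*) a)) xs) T"
  by (induction xs) (auto simp: algebra_simps)

lemma formal_sum_P_uminus: "- formal_sum_P xs T = formal_sum_P (map (apsnd uminus) xs) T"
  by (induction xs) auto

lemma formal_sum_P_diff:
  "formal_sum_P xs T - formal_sum_P ys T = formal_sum_P (xs @ map (apsnd uminus) ys) T"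
  by (simp add: formal_sum_P_append[symmetric] formal_sum_P_uminus[symmetric])

lemmas formal_sum_P_lincomb = formal_sum_P_append formal_sum_P_scale formal_sum_P_uminus formal_sum_P_diff

lemma formal_sum_P_eq_coeff_sum:
  assumes "finite S" "fst ` set xs \<subseteq> S"
  shows "formal_sum_P xs T = (\<Sum>k\<in>S. formal_coeff xs k * of_bool (T = mult_P k))"
  using assms(2)
proof (induction xs)
  case (Cons x xs)
  obtain n c where x: "x = (n, c)" by fastforce
  with Cons.prems have "n \<in> S" by simp
  then have "(\<Sum>k\<in>S. (if n = k then c else 0) * of_bool (T = mult_P k)) = c * of_bool (T = mult_P n)"
    using assms(1)
    by (subst sum.cong[OF refl, of _ _ "\<lambda>k. if n = k then c * of_bool (T = mult_P n) else 0"]) auto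
  with Cons x show ?case by (simp add: distrib_right sum.distrib del: sum_mult_of_bool_eq)
qed simp

lemma sum_symmetric_interval:
  fixes N :: int
  assumes "0 \<le> N"
  shows "(\<Sum>k\<in>{-N..N}. f k) = f 0 + (\<Sum>k\<in>{1..N}. f k + f (- k))"
proof -
  have "{-N..N} = {-N..-1} \<union> insert 0 {1..N}" using assms by auto
  moreover have "(\<Sum>k\<in>{-N..-1}. f k) = (\<Sum>k\<in>{1..N}. f (- k))"
    by (rule sum.reindex_bij_witness[of _ uminus uminus]) auto
  ultimately show ?thesis by (simp add: sum.union_disjoint sum.distrib add_ac)
qed

lemma symmetrized_sum_in_Zminus_rel:
  assumes "finite A" "\<forall>i\<in>A. onE (Q i)"
  shows "(\<lambda>T. \<Sum>i\<in>A. a i * (of_bool (T = Q i) + of_bool (T = negE (Q i)))) \<in> Zminus_rel"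
  using assms
proof (induction A rule: finite_induct)
  case empty
  then show ?case using Zminus_rel.zero by simp
next
  case (insert i A)
  then have "(\<lambda>T. (\<Sum>j\<in>A. a j * (of_bool (T = Q j) + of_bool (T = negE (Q j))))
      + a i * ((if T = Q i then 1 else 0) + (if T = negE (Q i) then 1 else 0))) \<in> Zminus_rel"
    by (intro Zminus_rel.gen) simp_all
  with insert.hyps show ?case by (simp add: of_bool_def add.commute)
qed

lemma formal_sum_P_in_Zminus_rel:
  assumes "0 \<le> N" "fst ` set xs \<subseteq> {-N..N}" "\<forall>k\<in>{1..N}. onE (mult_P k)"
    and symmetric: "\<forall>k\<in>{1..N}. formal_coeff xs (- k) = formal_coeff xs k"
    and "even (formal_coeff xs 0)"
  shows "formal_sum_P xs \<in> Zminus_rel"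
proof -
  let ?c = "formal_coeff xs"
  let ?a = "\<lambda>k. if k = 0 then ?c 0 div 2 else ?c k"
  let ?sym = "\<lambda>T k. of_bool (T = mult_P k) + of_bool (T = negE (mult_P k))"
  have "formal_sum_P xs = (\<lambda>T. \<Sum>k\<in>{0..N}. ?a k * ?sym T k)"
  proof
    fix T
    have "formal_sum_P xs T = (\<Sum>k\<in>{-N..N}. ?c k * of_bool (T = mult_P k))"
      using assms(2) by (rule formal_sum_P_eq_coeff_sum[OF finite_atLeastAtMost_int])
    also have "\<dots> = ?c 0 * of_bool (T = Inf)
        + (\<Sum>k\<in>{1..N}. ?c k * of_bool (T = mult_P k) + ?c (- k) * of_bool (T = mult_P (- k)))"
      by (simp add: sum_symmetric_interval[OF \<open>0 \<le> N\<close>] mult_P_table del: sum_mult_of_bool_eq)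
    also have "\<dots> = ?a 0 * ?sym T 0 + (\<Sum>k\<in>{1..N}. ?a k * ?sym T k)"
      using symmetric \<open>even (?c 0)\<close> by (simp add: mult_P_table mult_P_uminus algebra_simps)
    also have "\<dots> = (\<Sum>k\<in>insert 0 {1..N}. ?a k * ?sym T k)"
      by simp
    also have "insert 0 {1..N} = {0..N}"
      using \<open>0 \<le> N\<close> by auto
    finally show "formal_sum_P xs T = (\<Sum>k\<in>{0..N}. ?a k * ?sym T k)" .
  qed
  moreover have "onE (mult_P k)" if "k \<in> {0..N}" for k
    using assms(3) that by (cases "k = 0") (auto simp: mult_P_table)
  then have "(\<lambda>T. \<Sum>k\<in>{0..N}. ?a k * ?sym T k) \<in> Zminus_rel"
    by (intro symmetrized_sum_in_Zminus_rel) auto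
  ultimately show ?thesis by simp
qed

lemma divL_fx: "divL fx = formal_sum_P [(0, -2), (1, 1), (-1, 1)]"
  unfolding fx_def by (simp add: formal_sum_P_def mult_P_table mult_P_uminus)
    (rule divL_vertical; simp add: power2_eq_square algebra_simps)

lemma divL_fy: "divL fy = formal_sum_P [(0, -3), (1, 1), (2, 1), (-3, 1)]"
  unfolding fy_def by (simp add: formal_sum_P_def mult_P_table mult_P_uminus)
    (rule divL_nonvertical; simp add: power2_eq_square power3_eq_cube algebra_simps)

lemma divL_fx1: "divL fx1 = formal_sum_P [(0, -2), (2, 1), (-2, 1)]"
  unfolding fx1_def by (simp add: formal_sum_P_def mult_P_table mult_P_uminus)
    (rule divL_vertical; simp add: power2_eq_square algebra_simps)

lemma divL_fy1: "divL fy1 = formal_sum_P [(0, -3), (2, 1), (2, 1), (-4, 1)]"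
  unfolding fy1_def by (simp add: formal_sum_P_def mult_P_table mult_P_uminus)
    (rule divL_nonvertical; simp add: power2_eq_square power3_eq_cube algebra_simps)

lemma divL_fx2: "divL fx2 = formal_sum_P [(0, -2), (2, 1), (-2, 1)]"
  unfolding fx2_def by (simp add: formal_sum_P_def mult_P_table mult_P_uminus)
    (rule divL_vertical; simp add: power2_eq_square algebra_simps)

lemma divL_fy2: "divL fy2 = formal_sum_P [(0, -3), (2, 1), (-1, 1), (-1, 1)]"
  unfolding fy2_def by (simp add: formal_sum_P_def mult_P_table mult_P_uminus)
    (rule divL_nonvertical; simp add: power2_eq_square power3_eq_cube algebra_simps)

lemma divL_fmy: "divL fmy = formal_sum_P [(0, -3), (1, 1), (2, 1), (-3, 1)]"
  unfolding fmy_def by (simp add: formal_sum_P_def mult_P_table mult_P_uminus)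
    (rule divL_nonvertical; simp add: power2_eq_square power3_eq_cube algebra_simps)

lemma divL_f1py: "divL f1py = formal_sum_P [(0, -3), (-1, 1), (-2, 1), (3, 1)]"
  unfolding f1py_def by (simp add: formal_sum_P_def mult_P_table mult_P_uminus)
    (rule divL_nonvertical; simp add: power2_eq_square power3_eq_cube algebra_simps)

lemma divL_fxmy: "divL fxmy = formal_sum_P [(0, -3), (1, 1), (-4, 1), (3, 1)]"
  unfolding fxmy_def by (simp add: formal_sum_P_def mult_P_table mult_P_uminus)
    (rule divL_nonvertical; simp add: power2_eq_square power3_eq_cube algebra_simps)

lemma divL_f1mxpy: "divL f1mxpy = formal_sum_P [(0, -3), (2, 1), (-1, 1), (-1, 1)]"
  unfolding f1mxpy_def by (simp add: formal_sum_P_def mult_P_table mult_P_uminus)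
    (rule divL_nonvertical; simp add: power2_eq_square power3_eq_cube algebra_simps)

lemma diaL_formal_sum_P:
  assumes "divL f = formal_sum_P xs" "divL g = formal_sum_P ys"
    and "fst ` set xs \<subseteq> {-4..4}" "fst ` set ys \<subseteq> {-4..4}"
  shows "diaL f g = formal_sum_P (exp_diamond xs ys)"
  unfolding diaL_def assms(1,2) using assms(3,4)
  by (intro diamond_formal_sum_P) (auto intro!: subE_mult_P)

theorem mainTheorem2:
  shows "eqm (\<lambda>T. 7 * diaL fx fy T + diaL fx1 fy1 T)
             (\<lambda>T. -2 * diaL fmy f1py T + diaL fxmy f1mxpy T)
       \<and> eqm (\<lambda>T. 5 * diaL fx fy T + diaL fx2 fy2 T)
             (\<lambda>T. - diaL fmy f1py T + diaL fxmy f1mxpy T)"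
proof -
  have diamonds:
    "diaL fx fy = formal_sum_P (exp_diamond
       [(0, -2), (1, 1), (-1, 1)] [(0, -3), (1, 1), (2, 1), (-3, 1)])"
    "diaL fx1 fy1 = formal_sum_P (exp_diamond
       [(0, -2), (2, 1), (-2, 1)] [(0, -3), (2, 1), (2, 1), (-4, 1)])"
    "diaL fx2 fy2 = formal_sum_P (exp_diamond
       [(0, -2), (2, 1), (-2, 1)] [(0, -3), (2, 1), (-1, 1), (-1, 1)])"
    "diaL fmy f1py = formal_sum_P (exp_diamond
       [(0, -3), (1, 1), (2, 1), (-3, 1)] [(0, -3), (-1, 1), (-2, 1), (3, 1)])"
    "diaL fxmy f1mxpy = formal_sum_P (exp_diamond
       [(0, -3), (1, 1), (-4, 1), (3, 1)] [(0, -3), (2, 1), (-1, 1), (-1, 1)])"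
    using divL_fx divL_fy divL_fx1 divL_fy1 divL_fx2 divL_fy2 divL_fmy divL_f1py divL_fxmy divL_f1mxpy
    by (auto intro!: diaL_formal_sum_P)
  have "\<forall>k\<in>{1..6}. onE (mult_P k)"
    by (simp add: set_upto[symmetric] upto.simps mult_P_table power2_eq_square power3_eq_cube)
  then show ?thesis
    unfolding eqm_def diamonds formal_sum_P_lincomb
    by (intro conjI formal_sum_P_in_Zminus_rel[where N = 6])
       (simp_all add: set_upto[symmetric] upto.simps exp_diamond_def formal_coeff_def)
qed

end
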